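(* For all $a,a'\in\mathbb F_{3^m}$, the vectors $(\mathrm{Tr}_{2m}(at^{3^m+1}))_{t\in\mathbb F_{3^{2m}}}$ and $(\mathrm{Tr}_{2m}(at^{3^m+1})\,\mathrm{Tr}_{2m}(a't^{3^m+1}))_{t\in\mathbb F_{3^{2m}}}$ belong to $\mathcal C_3(\mathbb D_d)$.
   Context: Let $m\ge 2$ be an integer. For $s\in\{m,2m\}$ let $\mathrm{Tr}_s:\mathbb F_{3^s}\to\mathbb F_3$ denote the absolute trace. Vectors in $\mathbb F_3^{3^{2m}}$ are indexed by $\mathbb F_{3^{2m}}$, and a function $f:\mathbb F_{3^{2m}}\to\mathbb F_3$ is identified with $(f(t))_{t\in\mathbb F_{3^{2m}}}$. Let $\mathcal C(2m,3)=\{(\mathrm{Tr}_{2m}(at^{3^m+1}+bt)+h)_{t\in\mathbb F_{3^{2m}}}: a\in\mathbb F_{3^m}, b\in\mathbb F_{3^{2m}}, h\in\mathbb F_3\}$, let $d$ be its minimum nonzero Hamming weight, let $\mathbb D_d$ be the incidence structure on $\mathbb F_{3^{2m}}$ whose blocks are the supports of the weight-$d$ codewords, and let $\mathcal C_3(\mathbb D_d)$ be the $\mathbb F_3$-span of the incidence vectors of the blocks (entry $1$ on the block, $0$ elsewhere). *)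

theory Defs
  imports Main
begin

text \<open>The ambient field is a finite field type 'a (intended: F_{3^{2m}}).
  Subfields are realised inside 'a: F_{3^k} = {x. x^(3^k) = x}; in particular
  F_3 = {x. x^3 = x} is the prime field. Vectors indexed by F_{3^{2m}} with
  entries in F_3 are functions 'a => 'a (values in the prime field).\<close>

definition subF :: "nat \<Rightarrow> 'a::field set" where
  "subF k = {x. x ^ (3 ^ k) = x}"

definition F3 :: "'a::field set" where
  "F3 = {x. x ^ 3 = x}"

definition Tr :: "nat \<Rightarrow> 'a::field \<Rightarrow> 'a" where
  "Tr s x = (\<Sum>i<s. x ^ (3 ^ i))"

definition code_C :: "nat \<Rightarrow> ('a::{field,finite} \<Rightarrow> 'a) set" where
  "code_C m = {(\<lambda>t. Tr (2*m) (a * t ^ (3 ^ m + 1) + b * t) + h) | a b h.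
                  a \<in> subF m \<and> h \<in> F3}"

definition hweight :: "('a::finite \<Rightarrow> 'b::zero) \<Rightarrow> nat" where
  "hweight c = card {t. c t \<noteq> 0}"

definition min_weight :: "('a::finite \<Rightarrow> 'b::zero) set \<Rightarrow> nat" where
  "min_weight C = Min {hweight c | c. c \<in> C \<and> c \<noteq> (\<lambda>_. 0)}"

text \<open>Blocks of the design D_d: supports of the minimum-weight codewords.\<close>
definition min_blocks :: "('a::finite \<Rightarrow> 'b::zero) set \<Rightarrow> 'a set set" where
  "min_blocks C = {{t. c t \<noteq> 0} | c. c \<in> C \<and> hweight c = min_weight C}"

definition incidence_vec :: "'a set \<Rightarrow> 'a \<Rightarrow> 'b::{zero,one}" where
  "incidence_vec B = (\<lambda>t. if t \<in> B then 1 else 0)"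

definition span_F3 :: "'a set set \<Rightarrow> ('a \<Rightarrow> 'b::field) set" where
  "span_F3 Bs = {(\<lambda>t. \<Sum>B\<in>S. coef B * incidence_vec B t) | S coef.
                    finite S \<and> S \<subseteq> Bs \<and> (\<forall>B\<in>S. coef B \<in> F3)}"

end

theory Submission
  imports Defs "HOL-Number_Theory.Residues" "HOL-Computational_Algebra.Polynomial"
begin

text \<open>
  Write q = 3^m and Q_a(t) = Tr_2m(a t^(q+1)) for a in F_q. The norm t \<mapsto> t^(q+1) maps
  F_(q^2)^* onto F_q^* with fibres of size q + 1, and Tr_2m = -Tr_m on F_q; hence for a \<noteq> 0
  every nonzero level set of Q_a has 3^(m-1) (q+1) points. Completing the square turns
  Tr_2m(a t^(q+1) + b t) into a translate of Q_a plus a constant, so no nonzero codeword has more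
  zeros, and the translates Q_a(t+u) - e with e = \<plusminus>1 have minimum weight. Being F_3-valued,
  (Q_a(t+u) - e)^2 is the incidence vector of the support of such a codeword. In characteristic 3,
  Q = (Q+1)^2 - (Q-1)^2, Q^2 + 1 = -(Q+1)^2 - (Q-1)^2 and Q_a Q_a' = Q_(a+a')^2 - Q_(a-a')^2,
  and the constant 1 = -(Q_a(t+u) + Q_a(t-u) + Q_a(t)), valid whenever Q_a(u) = 1, takes care of
  the case a \<plusminus> a' = 0.
\<close>

lemma power_card_eq_self:
  fixes x :: "'a::{field,finite}"
  shows "x ^ card (UNIV :: 'a set) = x"
proof -
  let ?N = "UNIV - {0 :: 'a}"
  have card_UNIV: "card (UNIV :: 'a set) = Suc (card ?N)"
    by (simp add: card_Diff_singleton finite_UNIV_card_ge_0)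
  have "x ^ card ?N = 1" if "x \<noteq> 0"
  proof -
    have "bij_betw ((*) x) ?N ?N"
      using that by (intro bij_betwI[of _ _ _ "\<lambda>y. y / x"]) auto
    then have "(\<Prod>y\<in>?N. x * y) = \<Prod>?N"
      by (rule prod.reindex_bij_betw)
    then have "x ^ card ?N * \<Prod>?N = 1 * \<Prod>?N"
      by (simp add: prod.distrib)
    moreover have "\<Prod>?N \<noteq> 0"
      by simp
    ultimately show ?thesis
      by (rule mult_right_cancel[THEN iffD1, rotated])
  qed
  then show ?thesis
    unfolding card_UNIV by (cases "x = 0") simp_all
qed

lemma CHAR_eq_prime_of_card:
  assumes "prime p" and "card (UNIV :: 'a::{idom,finite} set) = p ^ n"
  shows "CHAR('a) = p"
proof -
  have "prime CHAR('a)"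
    by (simp add: prime_CHAR_semidom finite_imp_CHAR_pos)
  moreover have "CHAR('a) dvd p ^ n"
    using CHAR_dvd_CARD[where 'a = 'a] assms(2) by simp
  ultimately show ?thesis
    using assms(1) by (metis prime_dvd_power primes_dvd_imp_eq)
qed

lemma card_shift: "card {x. P (x + u)} = card {x :: 'a::group_add. P x}"
proof -
  have "{x. P (x + u)} = (\<lambda>x. x - u) ` {x. P x}"
    by (auto simp: image_iff intro!: exI[of _ "_ + u"])
  moreover have "inj (\<lambda>x::'a. x - u)"
    by (simp add: inj_on_def)
  ultimately show ?thesis
    by (simp add: card_image)
qed

lemma sum_le_card_mult_bound_imp_eq:
  fixes f :: "'b \<Rightarrow> nat"
  assumes "finite S" and le: "\<And>y. y \<in> S \<Longrightarrow> f y \<le> b" and "card S \<le> k"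
    and "k * b \<le> sum f S" and "b > 0"
  shows "card S = k" and "y \<in> S \<Longrightarrow> f y = b"
proof -
  have "sum f S \<le> card S * b"
    using sum_bounded_above[of S f b] le by simp
  then have "k * b \<le> card S * b"
    using assms(4) by linarith
  then show "card S = k"
    using assms(3,5) by simp
  then have "sum f S = sum (\<lambda>_. b) S"
    using assms(4) \<open>sum f S \<le> card S * b\<close> by simp
  then show "f y = b" if "y \<in> S"
    using sum_mono_inv[of f S "\<lambda>_. b"] le that \<open>finite S\<close> by blast
qed

lemma card_roots_le_of_coeff:
  fixes p :: "'a::idom poly"
  assumes "coeff p n \<noteq> 0" and "degree p \<le> n"
  shows "card {x. poly p x = 0} \<le> n"
proof -
  have "p \<noteq> 0" and "degree p = n"
    using assms le_degree by fastforce+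
  then show ?thesis
    using card_poly_roots_bound by metis
qed

lemma card_power_eq_le:
  assumes "n > 0"
  shows "card {x::'a::idom. x ^ n = y} \<le> n"
proof -
  have "card {x. poly (monom 1 n - monom y 0) x = (0::'a)} \<le> n"
  proof (rule card_roots_le_of_coeff)
    show "coeff (monom 1 n - monom y 0) n \<noteq> 0"
      using assms by simp
    show "degree (monom 1 n - monom y 0) \<le> n"
      by (intro degree_diff_le order_trans[OF degree_monom_le]) simp_all
  qed
  then show ?thesis
    by (simp add: poly_monom)
qed

lemma card_subF_le:
  assumes "k > 0"
  shows "card (subF k :: 'a::field set) \<le> 3 ^ k"
proof -
  have "card {x. poly (monom 1 (3 ^ k) - monom 1 1) x = (0::'a)} \<le> 3 ^ k"
  proof (rule card_roots_le_of_coeff)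
    show "coeff (monom 1 (3 ^ k) - monom 1 1) (3 ^ k) \<noteq> (0::'a)"
      using assms one_less_power[of "3::nat" k] by simp
    show "degree (monom 1 (3 ^ k) - monom (1::'a) 1) \<le> 3 ^ k"
      by (rule degree_diff_le) (auto simp: degree_monom_eq)
  qed
  then show ?thesis
    by (simp add: subF_def poly_monom)
qed

lemma card_Tr_eq_le:
  fixes b :: "'a::field"
  assumes "n > 0" and "b \<noteq> 0"
  shows "card {x. Tr n (b * x) = c} \<le> 3 ^ (n - 1)"
proof -
  define p where "p = (\<Sum>i<n. monom (b ^ 3 ^ i) (3 ^ i)) - monom c 0"
  have "coeff p (3 ^ (n - 1)) = (\<Sum>i<n. if i = n - 1 then b ^ 3 ^ i else 0)"
    by (simp add: p_def coeff_sum coeff_monom)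
  also have "\<dots> = b ^ 3 ^ (n - 1)"
    using assms(1) by simp
  finally have "coeff p (3 ^ (n - 1)) \<noteq> 0"
    using assms(2) by simp
  moreover have "degree p \<le> 3 ^ (n - 1)"
    unfolding p_def
  proof (intro degree_diff_le degree_sum_le)
    fix i assume "i \<in> {..<n}"
    then have "(3::nat) ^ i \<le> 3 ^ (n - 1)"
      by (intro power_increasing) auto
    then show "degree (monom (b ^ 3 ^ i) (3 ^ i)) \<le> 3 ^ (n - 1)"
      using degree_monom_le order_trans by blast
  qed (simp_all add: order_trans[OF degree_monom_le])
  ultimately have "card {x. poly p x = 0} \<le> 3 ^ (n - 1)"
    by (rule card_roots_le_of_coeff)
  then show ?thesis
    by (simp add: p_def poly_sum poly_monom Tr_def power_mult_distrib)
qed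

lemma subF_mult: "x \<in> subF k \<Longrightarrow> y \<in> subF k \<Longrightarrow> x * y \<in> (subF k :: 'a::field set)"
  by (simp add: subF_def power_mult_distrib)

lemma F3_iff: "x \<in> F3 \<longleftrightarrow> x = 0 \<or> x = 1 \<or> x = (-1 :: 'a::field)"
proof -
  have "x \<in> F3 \<longleftrightarrow> x ^ 3 - x = 0"
    by (simp add: F3_def)
  also have "x ^ 3 - x = x * (x - 1) * (x + 1)"
    by (simp add: algebra_simps power3_eq_cube)
  finally show ?thesis
    by (simp add: eq_neg_iff_add_eq_0)
qed

lemma F3_mult: "x \<in> F3 \<Longrightarrow> y \<in> F3 \<Longrightarrow> x * y \<in> (F3 :: 'a::field set)"
  by (simp add: F3_def power_mult_distrib)

lemma F3_minus: "x \<in> F3 \<Longrightarrow> - x \<in> (F3 :: 'a::field set)"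
  by (simp add: F3_def)

lemma F3_power_3_pow: "c \<in> F3 \<Longrightarrow> c ^ 3 ^ k = (c :: 'a::field)"
  by (induction k) (simp_all add: F3_def power_mult mult.commute[of 3])

lemma Tr_zero [simp]: "Tr n (0 :: 'a::field) = 0"
  by (simp add: Tr_def power_0_left)

lemma Tr_minus: "Tr n (- x) = - Tr n (x :: 'a::field)"
  by (simp add: Tr_def power_minus_odd sum_negf)

lemma Tr_mult_F3: "c \<in> F3 \<Longrightarrow> Tr n (c * x) = c * Tr n (x :: 'a::field)"
  by (simp add: Tr_def power_mult_distrib F3_power_3_pow sum_distrib_left)

lemma Tr_power_3:
  assumes "x ^ 3 ^ n = (x :: 'a::field)"
  shows "Tr n (x ^ 3) = Tr n x"
proof -
  have "Tr n (x ^ 3) = (\<Sum>i<n. x ^ 3 ^ Suc i)"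
    by (simp add: Tr_def power_mult[symmetric] mult.commute)
  also have "\<dots> = Tr n x"
    using sum.lessThan_Suc_shift[of "\<lambda>i. x ^ 3 ^ i" n] assms by (simp add: Tr_def)
  finally show ?thesis .
qed

lemma Tr_power_3_pow:
  assumes "x ^ 3 ^ n = (x :: 'a::field)"
  shows "Tr n (x ^ 3 ^ k) = Tr n x"
proof (induction k)
  case (Suc k)
  have "(x ^ 3 ^ k) ^ 3 ^ n = x ^ 3 ^ k"
    using assms by (metis power_mult mult.commute)
  moreover have "x ^ 3 ^ Suc k = (x ^ 3 ^ k) ^ 3"
    by (simp add: power_mult[symmetric] mult.commute)
  ultimately show ?case
    using Suc Tr_power_3[of "x ^ 3 ^ k"] by simp
qed simp

lemma Tr_double_subF:
  assumes "z \<in> subF m"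
  shows "Tr (2 * m) z = 2 * Tr m (z :: 'a::field)"
proof -
  have shift: "z ^ 3 ^ (i + m) = z ^ 3 ^ i" for i
  proof -
    have "z ^ 3 ^ (i + m) = (z ^ 3 ^ m) ^ 3 ^ i"
      by (simp only: power_add mult.commute[of "(3::nat) ^ i"] power_mult)
    then show ?thesis
      using assms by (simp add: subF_def)
  qed
  have "Tr (2 * m) z = (\<Sum>i = 0..<m. z ^ 3 ^ i) + (\<Sum>i = m..<m + m. z ^ 3 ^ i)"
    unfolding Tr_def mult_2 atLeast0LessThan[symmetric]
    by (rule sum.atLeastLessThan_concat[symmetric]) simp_all
  also have "(\<Sum>i = m..<m + m. z ^ 3 ^ i) = (\<Sum>i = 0..<m. z ^ 3 ^ i)"
    using sum.shift_bounds_nat_ivl[of "\<lambda>i. z ^ 3 ^ i" 0 m m] by (simp add: shift)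
  also have "(\<Sum>i = 0..<m. z ^ 3 ^ i) = Tr m z"
    by (simp add: Tr_def atLeast0LessThan)
  finally show ?thesis
    by (simp only: mult_2[of "Tr m z"])
qed

lemma incidence_vec_support_eq_square:
  assumes "\<And>t. g t \<in> F3"
  shows "incidence_vec {t. g t \<noteq> 0} = (\<lambda>t. (g t)\<^sup>2 :: 'a::field)"
proof
  fix t
  have "g t = 0 \<or> g t = 1 \<or> g t = -1"
    using assms F3_iff by blast
  then show "incidence_vec {t. g t \<noteq> 0} t = (g t)\<^sup>2"
    by (auto simp: incidence_vec_def)
qed

lemma zero_in_span_F3: "(\<lambda>_. 0) \<in> (span_F3 Bs :: ('b \<Rightarrow> 'a::field) set)"
  unfolding span_F3_def by (rule CollectI, rule exI[of _ "{}"]) simp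

lemma incidence_vec_in_span_F3: "B \<in> Bs \<Longrightarrow> (incidence_vec B :: 'b \<Rightarrow> 'a::field) \<in> span_F3 Bs"
  unfolding span_F3_def
  by (rule CollectI, rule exI[of _ "{B}"], rule exI[of _ "\<lambda>_. 1"]) (simp add: F3_def)

context
  assumes CHAR_3: "CHAR('a::field) = 3"
begin

lemma three_eq_zero: "(3 :: 'a) = 0"
  using of_nat_CHAR[where 'a = 'a] CHAR_3 by simp

lemma two_eq_minus_one: "(2 :: 'a) = - 1"
  using three_eq_zero by (simp add: eq_neg_iff_add_eq_0)

lemma two_neq_zero: "(2 :: 'a) \<noteq> 0"
  using two_eq_minus_one by fastforce

lemma four_eq_one: "(4 :: 'a) = 1"
proof -
  have "(4 :: 'a) = 3 + 1"
    by simp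
  then show ?thesis
    using three_eq_zero by simp
qed

lemma one_neq_minus_one: "(1 :: 'a) \<noteq> - 1"
  using two_eq_minus_one by (metis one_add_one eq_neg_iff_add_eq_0 zero_neq_one)

lemma pm_one_square_diff: "(x + 1)\<^sup>2 - (x - 1)\<^sup>2 = (x :: 'a)"
proof -
  have "(x + 1)\<^sup>2 - (x - 1)\<^sup>2 = 4 * x"
    by (simp add: power2_eq_square algebra_simps)
  then show ?thesis
    using four_eq_one by simp
qed

lemma pm_one_square_sum: "- (x + 1)\<^sup>2 - (x - 1)\<^sup>2 = (x :: 'a)\<^sup>2 + 1"
proof -
  have "- (x + 1)\<^sup>2 - (x - 1)\<^sup>2 = - 2 * (x\<^sup>2 + 1)"
    by (simp add: power2_eq_square algebra_simps)
  then show ?thesis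
    using two_eq_minus_one by simp
qed

lemma square_add_minus_square_diff: "(x + y)\<^sup>2 - (x - y)\<^sup>2 = x * (y :: 'a)"
proof -
  have "(x + y)\<^sup>2 - (x - y)\<^sup>2 = 4 * (x * y)"
    by (simp add: power2_eq_square algebra_simps)
  then show ?thesis
    using four_eq_one by simp
qed

lemma frobenius_add: "(x + y) ^ 3 ^ k = x ^ 3 ^ k + (y :: 'a) ^ 3 ^ k"
  by (rule freshmans_dream') (simp_all add: CHAR_3)

lemma frobenius_diff: "(x - y) ^ 3 ^ k = x ^ 3 ^ k - (y :: 'a) ^ 3 ^ k"
  using frobenius_add[of x "- y" k] by (simp add: power_minus_odd)

lemma subF_add: "x \<in> subF k \<Longrightarrow> y \<in> subF k \<Longrightarrow> x + y \<in> (subF k :: 'a set)"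
  by (simp add: subF_def frobenius_add)

lemma subF_diff: "x \<in> subF k \<Longrightarrow> y \<in> subF k \<Longrightarrow> x - y \<in> (subF k :: 'a set)"
  by (simp add: subF_def frobenius_diff)

lemma F3_add: "x \<in> F3 \<Longrightarrow> y \<in> F3 \<Longrightarrow> x + y \<in> (F3 :: 'a set)"
  using frobenius_add[of x y 1] by (simp add: F3_def)

lemma F3_diff: "x \<in> F3 \<Longrightarrow> y \<in> F3 \<Longrightarrow> x - y \<in> (F3 :: 'a set)"
  using F3_add[of x "- y"] F3_minus[of y] by simp

lemma two_in_F3: "(2 :: 'a) \<in> F3"
  using two_eq_minus_one F3_iff by metis

lemma card_F3: "card (F3 :: 'a set) = 3"
proof -
  have "F3 = {0, 1, - 1 :: 'a}"
    by (auto simp: F3_iff)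
  also have "card \<dots> = 3"
    using one_neq_minus_one by simp
  finally show ?thesis .
qed

lemma Tr_add: "Tr n (x + y) = Tr n x + Tr n (y :: 'a)"
  by (simp add: Tr_def frobenius_add sum.distrib)

lemma Tr_diff: "Tr n (x - y) = Tr n x - Tr n (y :: 'a)"
  by (simp add: Tr_def frobenius_diff sum_subtractf)

lemma Tr_in_F3:
  assumes "x ^ 3 ^ n = (x :: 'a)"
  shows "Tr n x \<in> F3"
proof -
  have "Tr n x ^ 3 = (\<Sum>i<n. (x ^ 3 ^ i) ^ 3)"
    unfolding Tr_def by (rule freshmans_dream_sum'[where n = 1]) (simp_all add: CHAR_3)
  also have "\<dots> = Tr n (x ^ 3)"
    unfolding Tr_def by (simp only: power_mult[symmetric] mult.commute)
  finally show ?thesis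
    using Tr_power_3[OF assms] by (simp add: F3_def)
qed

lemma span_F3_lincomb:
  fixes f g :: "'b \<Rightarrow> 'a"
  assumes "f \<in> span_F3 Bs" and "g \<in> span_F3 Bs" and "c \<in> F3" and "d \<in> F3"
  shows "(\<lambda>t. c * f t + d * g t) \<in> span_F3 Bs"
proof -
  obtain S\<^sub>f \<kappa>\<^sub>f where f: "f = (\<lambda>t. \<Sum>B\<in>S\<^sub>f. \<kappa>\<^sub>f B * incidence_vec B t)"
    and "finite S\<^sub>f" "S\<^sub>f \<subseteq> Bs" "\<forall>B\<in>S\<^sub>f. \<kappa>\<^sub>f B \<in> F3"
    using assms(1) unfolding span_F3_def by blast
  obtain S\<^sub>g \<kappa>\<^sub>g where g: "g = (\<lambda>t. \<Sum>B\<in>S\<^sub>g. \<kappa>\<^sub>g B * incidence_vec B t)"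
    and "finite S\<^sub>g" "S\<^sub>g \<subseteq> Bs" "\<forall>B\<in>S\<^sub>g. \<kappa>\<^sub>g B \<in> F3"
    using assms(2) unfolding span_F3_def by blast
  define S where "S = S\<^sub>f \<union> S\<^sub>g"
  define \<kappa> where "\<kappa> B = c * (if B \<in> S\<^sub>f then \<kappa>\<^sub>f B else 0) + d * (if B \<in> S\<^sub>g then \<kappa>\<^sub>g B else 0)" for B
  have "finite S"
    using \<open>finite S\<^sub>f\<close> \<open>finite S\<^sub>g\<close> by (simp add: S_def)
  have "c * f t + d * g t = (\<Sum>B\<in>S. \<kappa> B * incidence_vec B t)" for t
  proof -
    have "(\<Sum>B\<in>S. \<kappa> B * incidence_vec B t)
        = c * (\<Sum>B\<in>S. (if B \<in> S\<^sub>f then \<kappa>\<^sub>f B else 0) * incidence_vec B t)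
          + d * (\<Sum>B\<in>S. (if B \<in> S\<^sub>g then \<kappa>\<^sub>g B else 0) * incidence_vec B t)"
      by (simp add: \<kappa>_def sum.distrib sum_distrib_left algebra_simps)
    also have "\<dots> = c * f t + d * g t"
      unfolding f g using \<open>finite S\<close>
      by (intro arg_cong2[where f = "\<lambda>x y. c * x + d * y"] sum.mono_neutral_cong_right)
        (auto simp: S_def)
    finally show ?thesis ..
  qed
  moreover have "\<forall>B\<in>S. \<kappa> B \<in> F3"
    using \<open>\<forall>B\<in>S\<^sub>f. \<kappa>\<^sub>f B \<in> F3\<close> \<open>\<forall>B\<in>S\<^sub>g. \<kappa>\<^sub>g B \<in> F3\<close> assms(3,4) F3_iff[of 0]
    unfolding \<kappa>_def by (auto intro!: F3_add F3_mult)
  ultimately show ?thesis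
    using \<open>finite S\<close> \<open>S\<^sub>f \<subseteq> Bs\<close> \<open>S\<^sub>g \<subseteq> Bs\<close> unfolding span_F3_def S_def
    by (intro CollectI exI[of _ "S\<^sub>f \<union> S\<^sub>g"] exI[of _ \<kappa>]) auto
qed

end

section \<open>Level sets of the trace forms\<close>

definition trace_form :: "nat \<Rightarrow> 'a::field \<Rightarrow> 'a \<Rightarrow> 'a" where
  "trace_form m a t = Tr (2 * m) (a * t ^ (3 ^ m + 1))"

context
  fixes m :: nat
  assumes card_UNIV: "card (UNIV :: 'a::{field,finite} set) = 3 ^ (2 * m)"
    and m_pos: "m > 0"
begin

lemma CHAR_eq_3: "CHAR('a) = 3"
  using CHAR_eq_prime_of_card[OF _ card_UNIV] by simp

lemma frobenius_m_involution: "(x ^ 3 ^ m) ^ 3 ^ m = (x :: 'a)"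
  using power_card_eq_self[of x] card_UNIV by (simp add: power_add mult_2 flip: power_mult)

lemma power_3_pow_2m: "x ^ 3 ^ (2 * m) = (x :: 'a)"
  using power_card_eq_self[of x] card_UNIV by simp

lemma norm_in_subF: "t ^ (3 ^ m + 1) \<in> (subF m :: 'a set)"
proof -
  have "(t ^ (3 ^ m + 1)) ^ 3 ^ m = (t ^ 3 ^ m) ^ 3 ^ m * t ^ 3 ^ m"
    by (simp add: power_mult_distrib flip: power_mult)
  also have "\<dots> = t ^ (3 ^ m + 1)"
    by (simp add: frobenius_m_involution mult.commute)
  finally show ?thesis
    by (simp add: subF_def)
qed

lemma Tr_2m_in_F3: "Tr (2 * m) (x :: 'a) \<in> F3"
  using Tr_in_F3[OF CHAR_eq_3 power_3_pow_2m] .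

lemma
  shows card_subF: "card (subF m :: 'a set) = 3 ^ m"
    and card_norm_fibre: "y \<in> subF m \<Longrightarrow> y \<noteq> 0 \<Longrightarrow> card {t :: 'a. t ^ (3 ^ m + 1) = y} = 3 ^ m + 1"
proof -
  txt \<open>The fibres of the norm over \<open>S\<close> partition \<open>UNIV - {0}\<close> and have at most \<open>3^m + 1\<close>
    elements, while \<open>S\<close> has at most \<open>3^m - 1\<close>; as \<open>3^(2m) - 1 = (3^m - 1)(3^m + 1)\<close>,
    both bounds are attained.\<close>
  define S where "S = subF m - {0 :: 'a}"
  define fibre where "fibre y = {t :: 'a. t ^ (3 ^ m + 1) = y}" for y
  have "UNIV - {0} = (\<Union>y\<in>S. fibre y)"
    using norm_in_subF by (auto simp: S_def fibre_def)
  then have "card (UNIV - {0 :: 'a}) = (\<Sum>y\<in>S. card (fibre y))"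
    by (simp only:) (rule card_UN_disjoint, auto simp: fibre_def)
  moreover have "card (UNIV - {0 :: 'a}) = (3 ^ m - 1) * (3 ^ m + 1)"
  proof -
    obtain r where r: "(3 :: nat) ^ m = Suc r"
      using not0_implies_Suc by fastforce
    have "card (UNIV - {0 :: 'a}) = 3 ^ m * 3 ^ m - 1"
      using card_UNIV by (simp add: mult_2 power_add)
    then show ?thesis
      unfolding r by simp
  qed
  ultimately have total: "(3 ^ m - 1) * (3 ^ m + 1) \<le> (\<Sum>y\<in>S. card (fibre y))"
    by simp
  have card_S: "card S \<le> 3 ^ m - 1"
    using card_subF_le[OF m_pos, where 'a = 'a] by (simp add: S_def subF_def)
  have fibre_le: "card (fibre y) \<le> 3 ^ m + 1" for y
    unfolding fibre_def by (rule card_power_eq_le) simp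
  have "card S = 3 ^ m - 1"
    using sum_le_card_mult_bound_imp_eq(1)[OF _ fibre_le card_S total] by simp
  moreover have "card (subF m :: 'a set) = Suc (card S)"
    unfolding S_def by (rule card_Suc_Diff1[symmetric]) (simp_all add: subF_def power_0_left)
  ultimately show "card (subF m :: 'a set) = 3 ^ m"
    by simp
  show "card {t :: 'a. t ^ (3 ^ m + 1) = y}  = 3 ^ m + 1" if "y \<in> subF m" "y \<noteq> 0"
    using sum_le_card_mult_bound_imp_eq(2)[OF _ fibre_le card_S total] that
    by (simp add: S_def fibre_def)
qed

lemma card_subF_Tr_level_le:
  fixes a :: 'a
  assumes "a \<in> subF m" and "a \<noteq> 0"
  shows "card {y \<in> subF m. Tr (2 * m) (a * y) = c} \<le> 3 ^ (m - 1)"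
proof -
  have "Tr m (a * y) = - c" if "y \<in> subF m" and "Tr (2 * m) (a * y) = c" for y
  proof -
    have "2 * Tr m (a * y) = c"
      using Tr_double_subF subF_mult assms(1) that by metis
    then show ?thesis
      using two_eq_minus_one[OF CHAR_eq_3] by (metis minus_minus mult_minus1)
  qed
  then have "card {y \<in> subF m. Tr (2 * m) (a * y) = c} \<le> card {y. Tr m (a * y) = - c}"
    by (intro card_mono) auto
  also have "\<dots> \<le> 3 ^ (m - 1)"
    by (rule card_Tr_eq_le[OF m_pos assms(2)])
  finally show ?thesis .
qed

lemma card_subF_Tr_level:
  fixes a :: 'a
  assumes "a \<in> subF m" and "a \<noteq> 0" and "c \<in> F3"
  shows "card {y \<in> subF m. Tr (2 * m) (a * y) = c} = 3 ^ (m - 1)"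
proof -
  define level where "level c = {y \<in> subF m. Tr (2 * m) (a * y) = c}" for c
  have "subF m = (\<Union>c\<in>F3. level c)"
    by (auto simp: level_def Tr_2m_in_F3)
  then have "card (subF m :: 'a set) = (\<Sum>c\<in>F3. card (level c))"
    by (simp only:) (rule card_UN_disjoint, auto simp: level_def)
  then have "card (F3 :: 'a set) * 3 ^ (m - 1) \<le> (\<Sum>c\<in>F3. card (level c))"
    using m_pos by (simp add: card_subF card_F3[OF CHAR_eq_3] flip: power_Suc)
  from sum_le_card_mult_bound_imp_eq(2)[OF _ _ order.refl this] show ?thesis
    using card_subF_Tr_level_le[OF assms(1,2)] assms(3) by (simp add: level_def)
qed

lemma trace_form_level_eq_UN:
  "{t. trace_form m (a :: 'a) t = c} = (\<Union>y\<in>{y \<in> subF m. Tr (2 * m) (a * y) = c}. {t. t ^ (3 ^ m + 1) = y})"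
  using norm_in_subF by (auto simp: trace_form_def)

lemma card_trace_form_level:
  "card {t. trace_form m (a :: 'a) t = c} = (\<Sum>y\<in>{y \<in> subF m. Tr (2 * m) (a * y) = c}. card {t. t ^ (3 ^ m + 1) = y})"
  unfolding trace_form_level_eq_UN by (rule card_UN_disjoint) auto

lemma card_trace_form_level_le:
  fixes a :: 'a
  assumes "a \<in> subF m" and "a \<noteq> 0"
  shows "card {t. trace_form m a t = c} \<le> 3 ^ (m - 1) * (3 ^ m + 1)"
proof -
  have "card {t. trace_form m a t = c} \<le> (\<Sum>y\<in>{y \<in> subF m. Tr (2 * m) (a * y) = c}. 3 ^ m + 1)"
    unfolding card_trace_form_level by (rule sum_mono, rule card_power_eq_le) simp
  also have "\<dots> = card {y \<in> subF m. Tr (2 * m) (a * y) = c} * (3 ^ m + 1)"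
    by simp
  also have "\<dots> \<le> 3 ^ (m - 1) * (3 ^ m + 1)"
    using card_subF_Tr_level_le[OF assms] by (rule mult_right_mono) simp
  finally show ?thesis .
qed

lemma card_trace_form_level_nonzero:
  fixes a :: 'a
  assumes "a \<in> subF m" and "a \<noteq> 0" and "c \<in> F3" and "c \<noteq> 0"
  shows "card {t. trace_form m a t = c} = 3 ^ (m - 1) * (3 ^ m + 1)"
proof -
  have "card {t. t ^ (3 ^ m + 1) = y} = 3 ^ m + 1" if "y \<in> subF m" "Tr (2 * m) (a * y) = c" for y
    using card_norm_fibre[OF that(1)] that(2) assms(4) by fastforce
  then show ?thesis
    unfolding card_trace_form_level using card_subF_Tr_level[OF assms(1-3)] by simp
qed

lemma trace_form_shift:
  fixes a :: 'a
  assumes "a \<in> subF m"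
  shows "trace_form m a (t + u) = trace_form m a t + Tr (2 * m) (2 * a * u ^ 3 ^ m * t) + trace_form m a u"
proof -
  have "(t + u) ^ (3 ^ m + 1) = (t ^ 3 ^ m + u ^ 3 ^ m) * (t + u)"
    by (simp only: power_add power_one_right frobenius_add[OF CHAR_eq_3])
  then have expand: "a * (t + u) ^ (3 ^ m + 1)
      = a * t ^ (3 ^ m + 1) + a * t ^ 3 ^ m * u + a * u ^ 3 ^ m * t + a * u ^ (3 ^ m + 1)"
    by (simp add: algebra_simps)
  have "(a * u ^ 3 ^ m * t) ^ 3 ^ m = a * t ^ 3 ^ m * u"
    using assms by (simp add: power_mult_distrib frobenius_m_involution subF_def mult_ac)
  then have swap: "Tr (2 * m) (a * t ^ 3 ^ m * u) = Tr (2 * m) (a * u ^ 3 ^ m * t)"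
    using Tr_power_3_pow[OF power_3_pow_2m, of "a * u ^ 3 ^ m * t" m] by simp
  have double: "Tr (2 * m) (2 * a * u ^ 3 ^ m * t) = Tr (2 * m) (a * u ^ 3 ^ m * t) + Tr (2 * m) (a * u ^ 3 ^ m * t)"
    using Tr_mult_F3[OF two_in_F3[OF CHAR_eq_3], of "2 * m" "a * u ^ 3 ^ m * t"]
    by (simp only: mult.assoc mult_2[of "Tr (2 * m) (a * (u ^ 3 ^ m * t))"])
  show ?thesis
    unfolding trace_form_def expand Tr_add[OF CHAR_eq_3] swap double by (simp only: add_ac)
qed

section \<open>Minimum-weight codewords\<close>

lemma code_C_eq:
  "(code_C m :: ('a \<Rightarrow> 'a) set) = {(\<lambda>t. trace_form m a t + Tr (2 * m) (b * t) + h) | a b h. a \<in> subF m \<and> h \<in> F3}"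
  by (simp add: code_C_def trace_form_def Tr_add[OF CHAR_eq_3])

lemma card_zeros_codeword_le:
  fixes c :: "'a \<Rightarrow> 'a"
  assumes "c \<in> code_C m" and "c \<noteq> (\<lambda>_. 0)"
  shows "card {t. c t = 0} \<le> 3 ^ (m - 1) * (3 ^ m + 1)"
proof -
  obtain a b h where c: "c = (\<lambda>t. trace_form m a t + Tr (2 * m) (b * t) + h)" and a: "a \<in> subF m"
    using assms(1) by (auto simp: code_C_eq)
  consider (nondegenerate) "a \<noteq> 0" | (affine) "a = 0" "b \<noteq> 0" | (const) "a = 0" "b = 0"
    by blast
  then show ?thesis
  proof cases
    case nondegenerate
    txt \<open>Completing the square: the translation by \<open>u\<close> absorbs the linear term.\<close>
    define u where "u = (b / (2 * a)) ^ 3 ^ m"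
    have "2 * a * u ^ 3 ^ m = b"
      using nondegenerate two_neq_zero[OF CHAR_eq_3] by (simp add: u_def frobenius_m_involution)
    then have "{t. c t = 0} = {t. trace_form m a (t + u) = trace_form m a u - h}"
      using trace_form_shift[OF a] by (auto simp: c algebra_simps)
    then show ?thesis
      using card_shift[of "\<lambda>x. trace_form m a x = trace_form m a u - h" u]
        card_trace_form_level_le[OF a nondegenerate] by simp
  next
    case affine
    have "{t. c t = 0} = {t. Tr (2 * m) (b * t) = - h}"
      using affine by (auto simp: c trace_form_def eq_neg_iff_add_eq_0)
    then have "card {t. c t = 0} \<le> 3 ^ (2 * m - 1)"
      using card_Tr_eq_le[of "2 * m" b] m_pos affine by simp
    also have "\<dots> = 3 ^ (m - 1) * 3 ^ m"
      using m_pos by (simp add: mult_2 flip: power_add)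
    finally show ?thesis
      by simp
  next
    case const
    then have "{t. c t = 0} = {}"
      using assms(2) by (auto simp: c trace_form_def)
    then show ?thesis
      by simp
  qed
qed

lemma shifted_form_in_code_C:
  fixes a :: 'a
  assumes "a \<in> subF m" and "e \<in> F3"
  shows "(\<lambda>t. trace_form m a (t + u) - e) \<in> code_C m"
proof -
  have "(\<lambda>t. trace_form m a (t + u) - e)
      = (\<lambda>t. trace_form m a t + Tr (2 * m) ((2 * a * u ^ 3 ^ m) * t) + (trace_form m a u - e))"
    using trace_form_shift[OF assms(1)] by (simp add: fun_eq_iff mult.assoc)
  moreover have "trace_form m a u - e \<in> F3"
    using F3_diff[OF CHAR_eq_3 Tr_2m_in_F3 assms(2)] by (simp add: trace_form_def)
  ultimately show ?thesis
    unfolding code_C_eq using assms(1) by blast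
qed

lemma hweight_eq_card_zeros: "hweight (c :: 'a \<Rightarrow> 'a) = 3 ^ (2 * m) - card {t. c t = 0}"
proof -
  have "{t. c t \<noteq> 0} = UNIV - {t. c t = 0}"
    by auto
  then show ?thesis
    unfolding hweight_def using card_UNIV by (simp add: card_Diff_subset)
qed

lemma hweight_shifted_form:
  fixes a :: 'a
  assumes "a \<in> subF m" and "a \<noteq> 0" and "e \<in> F3" and "e \<noteq> 0"
  shows "hweight (\<lambda>t. trace_form m a (t + u) - e) = 3 ^ (2 * m) - 3 ^ (m - 1) * (3 ^ m + 1)"
  using card_shift[of "\<lambda>x. trace_form m a x = e" u] card_trace_form_level_nonzero[OF assms]
  by (simp add: hweight_eq_card_zeros)

lemma min_weight_code_C: "min_weight (code_C m :: ('a \<Rightarrow> 'a) set) = 3 ^ (2 * m) - 3 ^ (m - 1) * (3 ^ m + 1)"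
proof -
  define d :: nat where "d = 3 ^ (2 * m) - 3 ^ (m - 1) * (3 ^ m + 1)"
  define W where "W = {hweight c | c. c \<in> (code_C m :: ('a \<Rightarrow> 'a) set) \<and> c \<noteq> (\<lambda>_. 0)}"
  have "finite W"
    by (rule finite_subset[of _ "{..card (UNIV :: 'a set)}"]) (auto simp: W_def hweight_def card_mono)
  moreover have "d \<le> w" if "w \<in> W" for w
    using that card_zeros_codeword_le
    by (auto simp: W_def d_def hweight_eq_card_zeros intro!: diff_le_mono2)
  moreover have "d \<in> W"
  proof -
    let ?g = "\<lambda>t. trace_form m 1 (t + 0) - (1 :: 'a)"
    have one: "(1 :: 'a) \<in> subF m" "(1 :: 'a) \<in> F3"
      by (simp_all add: subF_def F3_def)
    have "hweight ?g = d"
      using hweight_shifted_form[OF one(1) _ one(2), of 0] by (simp add: d_def)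
    moreover have "?g \<noteq> (\<lambda>_. 0)"
      by (auto simp: fun_eq_iff trace_form_def power_0_left intro!: exI[of _ 0])
    ultimately show ?thesis
      unfolding W_def using shifted_form_in_code_C[OF one] by blast
  qed
  ultimately show ?thesis
    unfolding min_weight_def W_def[symmetric] d_def[symmetric] by (intro Min_eqI)
qed

lemma support_shifted_form_in_min_blocks:
  fixes a :: 'a
  assumes "a \<in> subF m" and "a \<noteq> 0" and "e \<in> F3" and "e \<noteq> 0"
  shows "{t. trace_form m a (t + u) \<noteq> e} \<in> min_blocks (code_C m)"
  unfolding min_blocks_def
  by (rule CollectI, rule exI[of _ "\<lambda>t. trace_form m a (t + u) - e"])
    (simp add: shifted_form_in_code_C[OF assms(1,3)] hweight_shifted_form[OF assms] min_weight_code_C)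

section \<open>The code of the design\<close>

abbreviation design_code :: "('a \<Rightarrow> 'a) set" where
  "design_code \<equiv> span_F3 (min_blocks (code_C m :: ('a \<Rightarrow> 'a) set))"

lemma square_shifted_form_in_design_code:
  fixes a :: 'a
  assumes "a \<in> subF m" and "a \<noteq> 0" and "e \<in> F3" and "e \<noteq> 0"
  shows "(\<lambda>t. (trace_form m a (t + u) - e)\<^sup>2) \<in> design_code"
proof -
  have "incidence_vec {t. trace_form m a (t + u) - e \<noteq> 0} = (\<lambda>t. (trace_form m a (t + u) - e)\<^sup>2)"
    by (rule incidence_vec_support_eq_square)
      (simp add: trace_form_def F3_diff[OF CHAR_eq_3 Tr_2m_in_F3 assms(3)])
  moreover have "incidence_vec {t. trace_form m a (t + u) - e \<noteq> 0} \<in> design_code"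
    using support_shifted_form_in_min_blocks[OF assms] by (simp add: incidence_vec_in_span_F3)
  ultimately show ?thesis
    by simp
qed

lemma
  fixes a :: 'a
  assumes "a \<in> subF m" and "a \<noteq> 0"
  shows shifted_form_in_design_code: "(\<lambda>t. trace_form m a (t + u)) \<in> design_code"
    and shifted_form_square_plus_one_in_design_code: "(\<lambda>t. (trace_form m a (t + u))\<^sup>2 + 1) \<in> design_code"
proof -
  have one: "(1 :: 'a) \<in> F3" "(1 :: 'a) \<noteq> 0" and minus_one: "(- 1 :: 'a) \<in> F3" "(- 1 :: 'a) \<noteq> 0"
    by (simp_all add: F3_iff)
  have plus: "(\<lambda>t. (trace_form m a (t + u) + 1)\<^sup>2) \<in> design_code"
    using square_shifted_form_in_design_code[OF assms minus_one] by simp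
  have minus: "(\<lambda>t. (trace_form m a (t + u) - 1)\<^sup>2) \<in> design_code"
    using square_shifted_form_in_design_code[OF assms one] .
  show "(\<lambda>t. trace_form m a (t + u)) \<in> design_code"
    using span_F3_lincomb[OF CHAR_eq_3 plus minus one(1) minus_one(1)]
    by (simp add: pm_one_square_diff[OF CHAR_eq_3])
  show "(\<lambda>t. (trace_form m a (t + u))\<^sup>2 + 1) \<in> design_code"
    using span_F3_lincomb[OF CHAR_eq_3 plus minus minus_one(1) minus_one(1)]
    by (simp add: pm_one_square_sum[OF CHAR_eq_3])
qed

lemma one_in_design_code: "(\<lambda>_. 1) \<in> design_code"
proof -
  have one: "(1 :: 'a) \<in> subF m" "(1 :: 'a) \<noteq> 0" "(1 :: 'a) \<in> F3" "(- 1 :: 'a) \<in> F3"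
    by (simp_all add: subF_def F3_iff)
  have "card {t. trace_form m 1 t = (1 :: 'a)} \<noteq> 0"
    using card_trace_form_level_nonzero[OF one(1,2,3) one(2)] by simp
  then obtain u where u: "trace_form m 1 u = (1 :: 'a)"
    by (metis (mono_tags) Collect_empty_eq card.empty)
  txt \<open>Parallelogram law \<open>Q(t + u) + Q(t - u) = 2 Q(t) + 2 Q(u)\<close>; adding \<open>Q(t)\<close> leaves \<open>2 = -1\<close>.\<close>
  have sum_shifts: "trace_form m 1 (t + u) + trace_form m 1 (t + - u) + trace_form m 1 t = - 1" for t
  proof -
    have "trace_form m 1 (- u) = trace_form m 1 u"
      by (simp add: trace_form_def)
    then have "trace_form m 1 (t + u) + trace_form m 1 (t + - u) = 2 * trace_form m 1 t + 2"
      using trace_form_shift[OF one(1), of t u] trace_form_shift[OF one(1), of t "- u"] u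
      by (simp add: power_minus_odd Tr_minus)
    then show ?thesis
      using three_eq_zero[OF CHAR_eq_3] two_eq_minus_one[OF CHAR_eq_3] by (simp add: algebra_simps)
  qed
  have "(\<lambda>_. 1) = (\<lambda>t. - (trace_form m 1 (t + u) + trace_form m 1 (t + - u) + trace_form m 1 t))"
    by (simp only: sum_shifts minus_minus)
  also have "\<dots> = (\<lambda>t. 1 * (- 1 * trace_form m 1 (t + u) + - 1 * trace_form m 1 (t + - u))
      + - 1 * trace_form m 1 (t + 0))"
    by simp
  also have "\<dots> \<in> design_code"
    by (intro span_F3_lincomb[OF CHAR_eq_3] shifted_form_in_design_code one)
  finally show ?thesis .
qed

lemma form_in_design_code:
  fixes a :: 'a
  assumes "a \<in> subF m"
  shows "trace_form m a \<in> design_code"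
proof (cases "a = 0")
  case True
  then have "trace_form m a = (\<lambda>_. 0)"
    by (simp add: fun_eq_iff trace_form_def)
  then show ?thesis
    using zero_in_span_F3 by simp
next
  case False
  then show ?thesis
    using shifted_form_in_design_code[OF assms False, of 0] by simp
qed

lemma form_square_plus_one_in_design_code:
  fixes a :: 'a
  assumes "a \<in> subF m"
  shows "(\<lambda>t. (trace_form m a t)\<^sup>2 + 1) \<in> design_code"
proof (cases "a = 0")
  case True
  then show ?thesis
    using one_in_design_code by (simp add: trace_form_def)
next
  case False
  then show ?thesis
    using shifted_form_square_plus_one_in_design_code[OF assms False, of 0] by simp
qed

lemma form_product_in_design_code:
  fixes a a' :: 'a
  assumes "a \<in> subF m" and "a' \<in> subF m"
  shows "(\<lambda>t. trace_form m a t * trace_form m a' t) \<in> design_code"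
proof -
  have "trace_form m (a + a') t = trace_form m a t + trace_form m a' t"
    and "trace_form m (a - a') t = trace_form m a t - trace_form m a' t" for t
    by (simp_all add: trace_form_def algebra_simps Tr_add[OF CHAR_eq_3] Tr_diff[OF CHAR_eq_3])
  moreover have "(\<lambda>t. 1 * ((trace_form m (a + a') t)\<^sup>2 + 1) + - 1 * ((trace_form m (a - a') t)\<^sup>2 + 1))
      \<in> design_code"
    using assms by (intro span_F3_lincomb[OF CHAR_eq_3] form_square_plus_one_in_design_code
        subF_add[OF CHAR_eq_3] subF_diff[OF CHAR_eq_3]) (simp_all add: F3_iff)
  ultimately show ?thesis
    by (simp add: square_add_minus_square_diff[OF CHAR_eq_3])
qed

end

theorem lemma3p8:
  fixes m :: nat and a a' :: "'a::{field,finite}"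
  assumes "m \<ge> 2"
    and "card (UNIV :: 'a set) = 3 ^ (2 * m)"
    and "a \<in> subF m" and "a' \<in> subF m"
  shows "((\<lambda>t. Tr (2*m) (a * t ^ (3 ^ m + 1))) \<in> span_F3 (min_blocks (code_C m :: ('a \<Rightarrow> 'a) set)))
       \<and> ((\<lambda>t. Tr (2*m) (a * t ^ (3 ^ m + 1)) * Tr (2*m) (a' * t ^ (3 ^ m + 1)))
           \<in> span_F3 (min_blocks (code_C m :: ('a \<Rightarrow> 'a) set)))"
proof -
  have "m > 0"
    using assms(1) by simp
  from form_in_design_code[OF assms(2) this assms(3)]
    form_product_in_design_code[OF assms(2) this assms(3,4)]
  show ?thesis
    by (simp add: trace_form_def[abs_def])
qed

end
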